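(* Let $g\ge1$, $n=g+1$, let $B\in\mathbb Z^{g\times n}$ have $B_{i,1}=1$, $B_{i,i+1}=-1$ and all other entries $0$, and $Q=BB^T$. Let $B^T(V_Q)$ denote the convex hull of $\{B^T\mathbf a:\mathbf a \text{ a vertex of } V_Q\}\subset\mathbb R^n$. Then $V_Q$ and $B^T(V_Q)$ are combinatorially equivalent, and the vertex set of $B^T(V_Q)$ is $\bigcup_{k=1}^gB^T([\mathbf k])$, where $B^T([\mathbf k])$ is the set of all coordinate permutations of the vector in $\mathbb R^n$ having $n-k$ entries equal to $\tfrac{k}{g+1}$ and $k$ entries equal to $-\tfrac{g+1-k}{g+1}$. Moreover, $B^T(V_Q)=\pi'(C^n)$, where $C^n=[-\tfrac12,\tfrac12]^n$ and $\pi':\mathbb R^n\to\mathbb R^n$ is the linear map with matrix entries $\pi'_{ii}=\tfrac{g}{g+1}$ and $\pi'_{ij}=-\tfrac1{g+1}$ for $i\neq j$ (the orthogonal projection along $(1,\dots,1)$).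
   Context: $V_Q=\{\mathbf a\in\mathbb R^g:\ \mathbf a^TQ\mathbf a\le(\mathbf a-\mathbf c)^TQ(\mathbf a-\mathbf c)\ \forall\mathbf c\in\mathbb Z^g\}$. For $k=1,\dots,g$, $[\mathbf k]\subset\mathbb R^g$ denotes the set of vectors with entries in $\{-\tfrac{k}{g+1},\tfrac{g+1-k}{g+1}\}$ having either $k$ or $k-1$ entries equal to $\tfrac{g+1-k}{g+1}$ (these are the vertices of $V_Q$), and $B^T([\mathbf k])=\{B^T\mathbf a:\mathbf a\in[\mathbf k]\}$. Two polytopes are combinatorially equivalent if there is an inclusion-preserving bijection between their face lattices. *)

theory Defs
  imports "HOL-Analysis.Analysis"
begin

text \<open>We model R^g as real^'g for an arbitrary finite index type 'g (so g = CARD('g) >= 1),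
and R^n, n = g+1, as real^('g option): the coordinate None plays the role of the
first column index 1, and Some i plays the role of column index i+1.\<close>

definition gnum :: "'g::finite itself \<Rightarrow> real" where
  "gnum _ = real CARD('g)"

definition Bmat :: "real^('g::finite option)^'g" where
  "Bmat = (\<chi> i j. case j of None \<Rightarrow> 1 | Some l \<Rightarrow> (if l = i then -1 else 0))"

definition Qmat :: "real^'g::finite^'g" where
  "Qmat = Bmat ** transpose Bmat"

definition int_vecs :: "(real^'g::finite) set" where
  "int_vecs = {c. \<forall>i. c $ i \<in> \<int>}"

definition voronoi_Q :: "(real^'g::finite) set" where
  "voronoi_Q = {a. \<forall>c\<in>int_vecs. a \<bullet> (Qmat *v a) \<le> (a - c) \<bullet> (Qmat *v (a - c))}"

definition BT :: "real^('g::finite) \<Rightarrow> real^('g option)" where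
  "BT a = transpose Bmat *v a"

definition vertex_class :: "nat \<Rightarrow> (real^'g::finite) set" where
  "vertex_class k = {a. (\<forall>i. a $ i \<in> {- real k / (gnum TYPE('g) + 1),
                                          (gnum TYPE('g) + 1 - real k) / (gnum TYPE('g) + 1)}) \<and>
      card {i. a $ i = (gnum TYPE('g) + 1 - real k) / (gnum TYPE('g) + 1)} \<in> {k, k - 1}}"

definition perm_class :: "nat \<Rightarrow> (real^('g::finite option)) set" where
  "perm_class k = {x. (\<forall>j. x $ j \<in> {real k / (gnum TYPE('g) + 1),
                                        - (gnum TYPE('g) + 1 - real k) / (gnum TYPE('g) + 1)}) \<and>
      card {j. x $ j = - (gnum TYPE('g) + 1 - real k) / (gnum TYPE('g) + 1)} = k}"

definition BT_VQ :: "(real^('g::finite option)) set" where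
  "BT_VQ = convex hull (BT ` {v :: real^'g. v extreme_point_of voronoi_Q})"

definition proj_mat :: "real^('g::finite option)^('g option)" where
  "proj_mat = (\<chi> i j. if i = j then gnum TYPE('g) / (gnum TYPE('g) + 1)
                                  else - 1 / (gnum TYPE('g) + 1))"

definition cube :: "(real^'n::finite) set" where
  "cube = {x. \<forall>j. \<bar>x $ j\<bar> \<le> 1/2}"

definition comb_equiv :: "('a::real_vector) set \<Rightarrow> ('b::real_vector) set \<Rightarrow> bool" where
  "comb_equiv P P' \<longleftrightarrow> (\<exists>f. bij_betw f {F. F face_of P} {G. G face_of P'} \<and>
      (\<forall>F1 F2. F1 face_of P \<longrightarrow> F2 face_of P \<longrightarrow> (F1 \<subseteq> F2 \<longleftrightarrow> f F1 \<subseteq> f F2)))"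

end

theory Submission
  imports Defs
begin

(* The map B^T sends Z^g bijectively onto the root lattice A_g = {y in Z^n. sum y = 0}, and
   a^T Q a = |B^T a|^2.  Hence B^T carries V_Q onto the Voronoi cell of A_g in the hyperplane
   sum x = 0, which is {x. sum x = 0 and x_i - x_j <= 1 for all i, j}; being linear and injective,
   it preserves the face lattice.  This cell is the image of the cube [-1/2,1/2]^n under the
   projection x - (sum x / n) (1,...,1), which is pi'.  So its vertices are projections of cube
   vertices: a cube vertex with k entries -1/2 goes to the vector with k entries k/n - 1 and n - k
   entries k/n, which is a vertex exactly when 0 < k < n (for k = 0 and k = n it is the centre 0).
   Since the first coordinate of B^T a is fixed by the zero sum, B^T([k]) is exactly this set. *)

section \<open>Faces under injective linear maps\<close>

lemma comb_equiv_linear_image: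
  fixes f :: "'a::real_vector \<Rightarrow> 'b::real_vector"
  assumes f: "linear f" "inj f"
  shows "comb_equiv S (f ` S)"
  unfolding comb_equiv_def
proof (intro exI conjI allI impI)
  show "bij_betw (image f) {F. F face_of S} {G. G face_of f ` S}"
  proof (rule bij_betw_imageI)
    show "inj_on (image f) {F. F face_of S}"
      using inj_image_eq_iff[OF f(2)] by (auto simp: inj_on_def)
    show "image f ` {F. F face_of S} = {G. G face_of f ` S}"
    proof (intro equalityI subsetI)
      fix G assume "G \<in> {G. G face_of f ` S}"
      then have G: "G face_of f ` S" by simp
      then have "G = f ` (S \<inter> f -` G)" using face_of_imp_subset by blast
      with G show "G \<in> image f ` {F. F face_of S}"
        using face_of_linear_image[OF f] by (metis mem_Collect_eq rev_image_eqI)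
    qed (use face_of_linear_image[OF f] in auto)
  qed
  fix F1 F2 :: "'a set"
  show "F1 \<subseteq> F2 \<longleftrightarrow> f ` F1 \<subseteq> f ` F2"
    by (simp add: inj_image_subset_iff f(2))
qed

lemma extreme_point_of_linear_image_iff:
  assumes "linear f" "inj f"
  shows "f x extreme_point_of f ` S \<longleftrightarrow> x extreme_point_of S"
  using face_of_linear_image[OF assms, of "{x}" S] by (simp add: face_of_singleton)

lemma extreme_points_of_linear_image:
  assumes "linear f" "inj f"
  shows "{y. y extreme_point_of f ` S} = f ` {x. x extreme_point_of S}"
proof (intro equalityI subsetI)
  fix y assume "y \<in> {y. y extreme_point_of f ` S}"
  moreover from this obtain x where "y = f x" by (auto simp: extreme_point_of_def)
  ultimately show "y \<in> f ` {x. x extreme_point_of S}"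
    by (simp add: extreme_point_of_linear_image_iff[OF assms])
qed (auto simp: extreme_point_of_linear_image_iff[OF assms])

lemma linear_eq_bound_on_open_segment:
  fixes \<phi> :: "'a::real_vector \<Rightarrow> real"
  assumes "linear \<phi>" and x: "x \<in> open_segment a b"
    and le: "\<phi> a \<le> c" "\<phi> b \<le> c" and eq: "\<phi> x = c"
  shows "\<phi> a = c \<and> \<phi> b = c"
proof -
  obtain u where u: "0 < u" "u < 1" and xu: "x = (1 - u) *\<^sub>R a + u *\<^sub>R b"
    using x by (auto simp: in_segment)
  have "\<phi> x = (1 - u) * \<phi> a + u * \<phi> b"
    unfolding xu linear_add[OF assms(1)] linear_scale[OF assms(1)] by simp
  then have "(1 - u) * (c - \<phi> a) + u * (c - \<phi> b) = 0"
    using eq by (simp add: algebra_simps)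
  moreover have "(1 - u) * (c - \<phi> a) \<ge> 0" "u * (c - \<phi> b) \<ge> 0"
    using u le by simp_all
  ultimately have "(1 - u) * (c - \<phi> a) = 0" "u * (c - \<phi> b) = 0" by linarith+
  with u show ?thesis by simp
qed

section \<open>The Voronoi cell of the root lattice\<close>

lemma cube_eq_cbox: "(cube :: (real^'n::finite) set) = cbox (\<chi> i. - 1/2) (\<chi> i. 1/2)"
  unfolding cube_def abs_le_iff set_eq_iff mem_box_cart mem_Collect_eq vec_lambda_beta
  by (metis minus_divide_left minus_le_iff)

lemma compact_cube: "compact (cube :: (real^'n::finite) set)"
  by (simp add: cube_eq_cbox)

lemma convex_cube: "convex (cube :: (real^'n::finite) set)"
  by (simp add: cube_eq_cbox)

lemma extreme_point_of_cube_component: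
  fixes c :: "real^'n::finite"
  assumes c: "c extreme_point_of cube"
  shows "c $ j \<in> {1/2, - 1/2}"
proof (rule ccontr)
  assume "c $ j \<notin> {1/2, - 1/2}"
  moreover have "c \<in> cube" using c by (simp add: extreme_point_of_def)
  moreover from this have "\<bar>c $ j\<bar> \<le> 1/2" by (simp add: cube_def)
  ultimately have "\<bar>c $ j\<bar> < 1/2" by (auto simp: abs_if)
  then obtain e where e: "0 < e" "\<bar>c $ j\<bar> + e \<le> 1/2"
    by (intro that[of "1/2 - \<bar>c $ j\<bar>"]) auto
  have shift: "c + t *\<^sub>R axis j 1 \<in> cube" if "\<bar>t\<bar> \<le> e" for t
    using \<open>c \<in> cube\<close> that e abs_triangle_ineq[of "c $ j" t]
    by (auto simp: cube_def axis_def)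
  have "c + e *\<^sub>R axis j 1 \<noteq> c + (- e) *\<^sub>R axis j 1"
    using e by (auto simp: vec_eq_iff axis_def dest: spec[of _ j])
  moreover have "midpoint (c + e *\<^sub>R axis j 1) (c + (- e) *\<^sub>R axis j 1) = c"
    by (simp add: midpoint_def vec_eq_iff)
  ultimately show False
    using c shift[of e] shift[of "- e"] midpoint_in_open_segment e(1)
    unfolding extreme_point_of_def by (metis abs_minus_cancel abs_of_pos order_refl)
qed

lemma sum_two_valued:
  fixes x :: "real^'n::finite" and c d :: real
  assumes "\<forall>j. x $ j \<in> {c, d}"
  shows "(\<Sum>j\<in>UNIV. x $ j) = CARD('n) * d + card {j. x $ j = c} * (c - d)"
proof -
  have "(\<Sum>j\<in>UNIV. x $ j) = (\<Sum>j\<in>UNIV. d + (if x $ j = c then c - d else 0))"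
    using assms by (intro sum.cong) auto
  then show ?thesis by (simp add: sum.distrib sum.If_cases)
qed

lemma two_mult_le_square_of_Ints:
  fixes c y :: real
  assumes "\<bar>c\<bar> \<le> 1/2" "y \<in> \<int>"
  shows "2 * c * y \<le> y * y"
proof (cases "y = 0")
  case False
  with assms(2) have "1 \<le> \<bar>y\<bar>" by (metis Ints_nonzero_abs_ge1)
  have "2 * c * y \<le> (2 * \<bar>c\<bar>) * \<bar>y\<bar>"
    using abs_ge_self[of "c * y"] by (simp add: abs_mult)
  also have "\<dots> \<le> 1 * \<bar>y\<bar>" using assms(1) by (intro mult_right_mono) auto
  also have "\<dots> \<le> \<bar>y\<bar> * \<bar>y\<bar>" using \<open>1 \<le> \<bar>y\<bar>\<close> by (intro mult_right_mono) auto
  finally show ?thesis by (simp add: abs_mult[symmetric])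
qed simp

definition root_lattice :: "(real^'n::finite) set" where
  "root_lattice = {y. (\<forall>j. y $ j \<in> \<int>) \<and> (\<Sum>j\<in>UNIV. y $ j) = 0}"

definition root_cell :: "(real^'n::finite) set" where
  "root_cell = {x. (\<Sum>j\<in>UNIV. x $ j) = 0 \<and> (\<forall>i j. x $ i - x $ j \<le> 1)}"

definition centering :: "real^'n::finite \<Rightarrow> real^'n" where
  "centering x = (\<chi> j. x $ j - (\<Sum>i\<in>UNIV. x $ i) / CARD('n))"

lemma linear_centering: "linear centering"
  by (rule linearI) (simp_all add: centering_def vec_eq_iff sum.distrib algebra_simps
      add_divide_distrib flip: sum_distrib_left)

lemma sum_centering: "(\<Sum>j\<in>UNIV. centering x $ j) = 0"
  by (simp add: centering_def sum_subtractf)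

lemma centering_diff: "centering x $ i - centering x $ j = x $ i - x $ j"
  by (simp only: centering_def vec_lambda_beta)

lemma centering_add_constant: "centering (\<chi> j. x $ j + t) = centering x"
  by (simp add: centering_def vec_eq_iff sum.distrib add_divide_distrib)

lemma centering_eq_self: "(\<Sum>j\<in>UNIV. x $ j) = 0 \<Longrightarrow> centering x = x"
  by (simp add: centering_def vec_eq_iff)

lemma centering_mem_root_cell_iff: "centering x \<in> root_cell \<longleftrightarrow> (\<forall>i j. x $ i - x $ j \<le> 1)"
  by (simp add: root_cell_def sum_centering centering_diff)

lemma centering_cube: "centering ` cube = root_cell"
proof
  show "centering ` cube \<subseteq> root_cell"
  proof (rule image_subsetI)
    fix c :: "real^'n" assume "c \<in> cube"
    have "c $ i - c $ j \<le> 1" for i j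
    proof -
      have "\<bar>c $ i\<bar> \<le> 1/2" "\<bar>c $ j\<bar> \<le> 1/2" using \<open>c \<in> cube\<close> by (simp_all add: cube_def)
      then show ?thesis by linarith
    qed
    then show "centering c \<in> root_cell" by (simp add: centering_mem_root_cell_iff)
  qed
next
  show "root_cell \<subseteq> centering ` cube"
  proof
    fix x :: "real^'n" assume x: "x \<in> root_cell"
    define M where "M = Max (range (\<lambda>j. x $ j))"
    have "M \<in> range (\<lambda>j. x $ j)" unfolding M_def by (rule Max_in) auto
    then obtain j0 where "M = x $ j0" by blast
    then have lo: "M - x $ j \<le> 1" for j using x by (simp add: root_cell_def)
    have hi: "x $ j \<le> M" for j by (simp add: M_def)
    have "\<bar>x $ j + 1/2 - M\<bar> \<le> 1/2" for j
      using lo[of j] hi[of j] by arith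
    then have "(\<chi> j. x $ j + (1/2 - M)) \<in> cube" by (simp add: cube_def add_diff_eq)
    moreover have "centering (\<chi> j. x $ j + (1/2 - M)) = x"
      using x by (simp add: centering_add_constant centering_eq_self root_cell_def)
    ultimately show "x \<in> centering ` cube" by (metis image_eqI)
  qed
qed

lemma compact_root_cell: "compact (root_cell :: (real^'n::finite) set)"
  unfolding centering_cube[symmetric]
  by (intro compact_continuous_image compact_cube linear_continuous_on linear_centering
      [unfolded linear_conv_bounded_linear])

lemma convex_root_cell: "convex (root_cell :: (real^'n::finite) set)"
  unfolding centering_cube[symmetric] by (intro convex_linear_image convex_cube linear_centering)

lemma root_cell_iff_origin_nearest:
  fixes x :: "real^'n::finite"
  assumes x: "(\<Sum>j\<in>UNIV. x $ j) = 0"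
  shows "x \<in> root_cell \<longleftrightarrow> (\<forall>y\<in>root_lattice. x \<bullet> x \<le> (x - y) \<bullet> (x - y))"
proof -
  have dist: "(x - y) \<bullet> (x - y) - x \<bullet> x = y \<bullet> y - 2 * (x \<bullet> y)" for y
    by (simp add: inner_diff_left inner_diff_right inner_commute)
  show ?thesis
  proof
    assume "x \<in> root_cell"
    then obtain c where c: "c \<in> cube" and xc: "x = centering c"
      using centering_cube by blast
    show "\<forall>y\<in>root_lattice. x \<bullet> x \<le> (x - y) \<bullet> (x - y)"
    proof
      fix y :: "real^'n" assume y: "y \<in> root_lattice"
      have "x \<bullet> y = (\<Sum>j\<in>UNIV. c $ j * y $ j)
          - (\<Sum>j\<in>UNIV. c $ j) / CARD('n) * (\<Sum>j\<in>UNIV. y $ j)"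
        by (simp add: xc inner_vec_def centering_def left_diff_distrib sum_subtractf
            sum_distrib_left)
      with y have "x \<bullet> y = (\<Sum>j\<in>UNIV. c $ j * y $ j)" by (simp add: root_lattice_def)
      then have "2 * (x \<bullet> y) = (\<Sum>j\<in>UNIV. 2 * c $ j * y $ j)"
        by (simp add: sum_distrib_left mult.assoc)
      also have "\<dots> \<le> (\<Sum>j\<in>UNIV. y $ j * y $ j)"
        using c y by (intro sum_mono two_mult_le_square_of_Ints)
          (auto simp: cube_def root_lattice_def)
      also have "\<dots> = y \<bullet> y" by (simp add: inner_vec_def)
      finally show "x \<bullet> x \<le> (x - y) \<bullet> (x - y)" using dist[of y] by linarith
    qed
  next
    assume nearest: "\<forall>y\<in>root_lattice. x \<bullet> x \<le> (x - y) \<bullet> (x - y)"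
    have "x $ i - x $ j \<le> 1" if "i \<noteq> j" for i j
    proof -
      let ?y = "axis i 1 - axis j 1 :: real^'n"
      have "?y \<in> root_lattice" by (simp add: root_lattice_def axis_def sum_subtractf)
      moreover have "x \<bullet> ?y = x $ i - x $ j" by (simp add: inner_diff_right inner_axis)
      moreover have "?y \<bullet> ?y = 2"
        using that by (simp add: inner_diff_right inner_diff_left inner_axis_axis)
      ultimately show ?thesis using nearest dist[of ?y] by fastforce
    qed
    then show "x \<in> root_cell" using x by (force simp: root_cell_def)
  qed
qed

definition level_vectors :: "nat \<Rightarrow> (real^'n::finite) set" where
  "level_vectors k = {x. (\<forall>j. x $ j \<in> {k / CARD('n), k / CARD('n) - 1}) \<and>
     card {j. x $ j = k / CARD('n) - 1} = k}"

lemma sum_level_vector: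
  assumes "(x :: real^'n::finite) \<in> level_vectors k"
  shows "(\<Sum>j\<in>UNIV. x $ j) = 0"
  using assms sum_two_valued[of x "k / CARD('n) - 1" "k / CARD('n)"]
  by (simp add: level_vectors_def insert_commute)

lemma level_vectors_subset_root_cell: "level_vectors k \<subseteq> root_cell"
proof
  fix x :: "real^'n" assume x: "x \<in> level_vectors k"
  have "x $ i - x $ j \<le> 1" for i j
    using x unfolding level_vectors_def by (smt (verit) insert_iff mem_Collect_eq singletonD)
  with sum_level_vector[OF x] show "x \<in> root_cell" by (simp add: root_cell_def)
qed

lemma level_vector_eq_if_tight:
  fixes x w :: "real^'n::finite" and k :: nat
  defines "\<alpha> \<equiv> k / CARD('n)"
  assumes x: "x \<in> level_vectors k" and k: "0 < k" "k < CARD('n)" and w: "w \<in> root_cell"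
    and tight: "\<And>i j. x $ i = \<alpha> \<Longrightarrow> x $ j = \<alpha> - 1 \<Longrightarrow> w $ i - w $ j = 1"
  shows "w = x"
proof -
  have vals: "x $ j = \<alpha> \<or> x $ j = \<alpha> - 1" for j
    using x by (simp add: level_vectors_def \<alpha>_def)
  have card: "card {j. x $ j = \<alpha> - 1} = k" using x by (simp add: level_vectors_def \<alpha>_def)
  then have "{j. x $ j = \<alpha> - 1} \<noteq> {}" using k(1) by (metis card.empty less_irrefl)
  then obtain j0 where j0: "x $ j0 = \<alpha> - 1" by blast
  have "{j. x $ j = \<alpha> - 1} \<noteq> UNIV" using card k(2) by auto
  then obtain i0 where "x $ i0 \<noteq> \<alpha> - 1" by blast
  with vals have i0: "x $ i0 = \<alpha>" by metis
  define d where "d m = w $ m - x $ m" for m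
  have const: "d m = d j0" for m
    using vals[of m] tight[of m j0] tight[of i0 m] tight[of i0 j0] i0 j0 by (auto simp: d_def)
  have "CARD('n) * d j0 = (\<Sum>m\<in>UNIV. d m)" by (simp add: sum.cong[OF refl const])
  also have "\<dots> = 0"
    using w sum_level_vector[OF x] by (simp add: d_def sum_subtractf root_cell_def)
  finally have "d m = 0" for m by (simp add: const[of m])
  then show ?thesis by (simp add: vec_eq_iff d_def)
qed

lemma extreme_point_of_root_cell_level_vector:
  assumes x: "(x :: real^'n::finite) \<in> level_vectors k" and k: "0 < k" "k < CARD('n)"
  shows "x extreme_point_of root_cell"
  unfolding extreme_point_of_def
proof (intro conjI ballI notI)
  show "x \<in> root_cell" using x level_vectors_subset_root_cell by blast
  fix a b assume ab: "a \<in> root_cell" "b \<in> root_cell" and seg: "x \<in> open_segment a b"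
  have "a $ i - a $ j = 1 \<and> b $ i - b $ j = 1"
    if "x $ i = k / CARD('n)" "x $ j = k / CARD('n) - 1" for i j
  proof (rule linear_eq_bound_on_open_segment[OF _ seg])
    show "linear (\<lambda>w :: real^'n. w $ i - w $ j)" by (simp add: linear_iff algebra_simps)
  qed (use ab that in \<open>auto simp: root_cell_def\<close>)
  then have "a = x" "b = x"
    using level_vector_eq_if_tight[OF x k] ab by blast+
  with seg show False by simp
qed

lemma centering_cube_vertex:
  fixes c :: "real^'n::finite"
  assumes c: "\<forall>j. c $ j \<in> {1/2, - 1/2}"
  shows "centering c \<in> level_vectors (card {j. c $ j = - 1/2})"
proof -
  define k where "k = card {j. c $ j = - 1/2}"
  have "(\<Sum>j\<in>UNIV. c $ j) = CARD('n) / 2 - k"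
    using sum_two_valued[of c "- 1/2" "1/2"] c by (simp add: k_def insert_commute)
  then have "centering c $ j = c $ j - 1/2 + k / CARD('n)" for j
    by (simp add: centering_def diff_divide_distrib)
  with c have "centering c $ j = (if c $ j = - 1/2 then k / CARD('n) - 1 else k / CARD('n))" for j
    by (auto dest: spec[of _ j])
  then show ?thesis by (simp add: level_vectors_def k_def)
qed

lemma level_vector_eq_0:
  assumes x: "(x :: real^'n::finite) \<in> level_vectors k" and k: "k = 0 \<or> k = CARD('n)"
  shows "x = 0"
  using k
proof
  assume "k = 0"
  with x show "x = 0" by (auto simp: level_vectors_def vec_eq_iff)
next
  assume "k = CARD('n)"
  with x have "{j. x $ j = 0} = UNIV"
    by (auto simp: level_vectors_def card_eq_UNIV_imp_eq_UNIV)
  then show "x = 0" by (auto simp: vec_eq_iff)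
qed

lemma not_extreme_point_of_root_cell_0:
  assumes "2 \<le> CARD('n::finite)"
  shows "\<not> (0 :: real^'n) extreme_point_of root_cell"
proof
  assume ext: "(0 :: real^'n) extreme_point_of root_cell"
  obtain a b :: 'n where "a \<noteq> b"
    using assms card_le_Suc0_iff_eq[of "UNIV :: 'n set"] by fastforce
  define u where "u = centering (axis a 1 :: real^'n)"
  have "u \<in> root_cell" "- u \<in> root_cell"
    by (simp_all add: u_def centering_mem_root_cell_iff axis_def
        flip: linear_neg[OF linear_centering])
  moreover have "u \<noteq> - u"
    using \<open>a \<noteq> b\<close> by (auto simp: u_def centering_def vec_eq_iff axis_def dest: spec[of _ b])
  moreover have "midpoint u (- u) = 0" by (simp add: midpoint_def)
  ultimately show False using ext midpoint_in_open_segment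
    unfolding extreme_point_of_def by metis
qed

lemma extreme_points_of_root_cell:
  assumes "2 \<le> CARD('n::finite)"
  shows "{x :: real^'n. x extreme_point_of root_cell} = (\<Union>k\<in>{1..<CARD('n)}. level_vectors k)"
proof (intro equalityI subsetI)
  fix x :: "real^'n" assume "x \<in> {x. x extreme_point_of root_cell}"
  then have ext: "x extreme_point_of root_cell" by simp
  have "root_cell = centering ` (convex hull {c. c extreme_point_of (cube :: (real^'n) set)})"
    using Krein_Milman_Minkowski[OF compact_cube convex_cube] centering_cube by metis
  then have "root_cell = convex hull (centering ` {c. c extreme_point_of (cube :: (real^'n) set)})"
    by (simp add: convex_hull_linear_image linear_centering)
  with ext have "x \<in> centering ` {c. c extreme_point_of (cube :: (real^'n) set)}"
    by (metis extreme_point_of_convex_hull)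
  then obtain c :: "real^'n" where "c extreme_point_of cube" and xc: "x = centering c"
    by blast
  then have "\<forall>j. c $ j \<in> {1/2, - 1/2}" using extreme_point_of_cube_component by blast
  then have x: "x \<in> level_vectors (card {j. c $ j = - 1/2})"
    unfolding xc by (rule centering_cube_vertex)
  have "x \<noteq> 0" using ext not_extreme_point_of_root_cell_0[OF assms] by metis
  with x have "card {j. c $ j = - 1/2} \<in> {1..<CARD('n)}"
    using level_vector_eq_0 card_mono[of UNIV "{j. c $ j = - 1/2}"]
    by (fastforce simp: Suc_le_eq order.order_iff_strict)
  with x show "x \<in> (\<Union>k\<in>{1..<CARD('n)}. level_vectors k)" by blast
next
  fix x :: "real^'n" assume "x \<in> (\<Union>k\<in>{1..<CARD('n)}. level_vectors k)"
  then obtain k where "x \<in> level_vectors k" "0 < k" "k < CARD('n)" by auto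
  then show "x \<in> {x. x extreme_point_of root_cell}"
    by (simp add: extreme_point_of_root_cell_level_vector)
qed

section \<open>The map B^T\<close>

lemma sum_UNIV_option:
  "(\<Sum>j\<in>(UNIV :: 'a::finite option set). f j) = f None + (\<Sum>l\<in>UNIV. f (Some l))"
  unfolding UNIV_option_conv by (simp add: sum.reindex)

lemma card_Collect_option:
  "card {j :: 'a::finite option. P j} = card {l. P (Some l)} + (if P None then 1 else 0)"
proof -
  have "{j. P j} = (if P None then {None} else {}) \<union> Some ` {l. P (Some l)}"
    by (auto simp: image_iff) (metis option.exhaust)+
  moreover have "card (Some ` {l. P (Some l)}) = card {l. P (Some l)}"
    by (rule card_image) simp
  ultimately show ?thesis by (simp add: card_Un_disjoint)
qed

lemma level_vectors_option_iff:
  fixes x :: "real^('n::finite option)" and k :: nat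
  defines "\<alpha> \<equiv> k / CARD('n option)"
  shows "x \<in> level_vectors k \<longleftrightarrow> (\<Sum>j\<in>UNIV. x $ j) = 0 \<and>
    (\<forall>l. x $ Some l \<in> {\<alpha>, \<alpha> - 1}) \<and> card {l. x $ Some l = \<alpha> - 1} \<in> {k, k - 1}"
proof
  assume x: "x \<in> level_vectors k"
  then show "(\<Sum>j\<in>UNIV. x $ j) = 0 \<and>
    (\<forall>l. x $ Some l \<in> {\<alpha>, \<alpha> - 1}) \<and> card {l. x $ Some l = \<alpha> - 1} \<in> {k, k - 1}"
    using card_Collect_option[of "\<lambda>j. x $ j = \<alpha> - 1"]
    by (auto simp: sum_level_vector level_vectors_def \<alpha>_def split: if_splits)
next
  assume "(\<Sum>j\<in>UNIV. x $ j) = 0 \<and>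
    (\<forall>l. x $ Some l \<in> {\<alpha>, \<alpha> - 1}) \<and> card {l. x $ Some l = \<alpha> - 1} \<in> {k, k - 1}"
  then have sum: "(\<Sum>j\<in>UNIV. x $ j) = 0" and vals: "\<forall>l. x $ Some l \<in> {\<alpha> - 1, \<alpha>}"
    and card: "card {l. x $ Some l = \<alpha> - 1} \<in> {k, k - 1}" by auto
  define m where "m = card {l. x $ Some l = \<alpha> - 1}"
  have "(\<Sum>l\<in>UNIV. x $ Some l) = CARD('n) * \<alpha> - m"
    using sum_two_valued[of "\<chi> l. x $ Some l" "\<alpha> - 1" \<alpha>] vals by (simp add: m_def)
  moreover have "CARD('n) * \<alpha> = k - \<alpha>"
    by (simp add: \<alpha>_def field_simps)
  ultimately have None: "x $ None = \<alpha> - k + m"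
    using sum by (simp add: sum_UNIV_option)
  have mk: "m = k \<or> m + 1 = k" using card by (auto simp: m_def)
  then have "x $ None = (if m = k then \<alpha> else \<alpha> - 1)" by (auto simp: None)
  then have "\<forall>j. x $ j \<in> {\<alpha>, \<alpha> - 1}" and "card {j. x $ j = \<alpha> - 1} = k"
    using vals mk card_Collect_option[of "\<lambda>j. x $ j = \<alpha> - 1"]
    by (auto simp: split_option_all m_def[symmetric])
  then show "x \<in> level_vectors k" unfolding level_vectors_def \<alpha>_def by simp
qed

lemma BT_None: "(BT a :: real^('g::finite option)) $ None = (\<Sum>i\<in>UNIV. a $ i)"
  by (simp add: BT_def Bmat_def vector_matrix_mult_def)

lemma BT_Some: "(BT a :: real^('g::finite option)) $ Some l = - a $ l"
  by (simp add: BT_def Bmat_def vector_matrix_mult_def if_distrib cong: if_cong)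

lemma sum_BT: "(\<Sum>j\<in>UNIV. (BT a :: real^('g::finite option)) $ j) = 0"
  by (simp add: sum_UNIV_option BT_None BT_Some sum_negf)

lemma linear_BT: "linear (BT :: real^'g::finite \<Rightarrow> real^('g option))"
  unfolding BT_def[abs_def] by (rule matrix_vector_mul_linear)

lemma inj_BT: "inj (BT :: real^'g::finite \<Rightarrow> real^('g option))"
  by (auto simp: inj_on_def vec_eq_iff BT_Some dest: spec[where x="Some _"])

lemma range_BT: "range (BT :: real^'g::finite \<Rightarrow> real^('g option)) = {x. (\<Sum>j\<in>UNIV. x $ j) = 0}"
proof (intro equalityI subsetI)
  fix x :: "real^('g option)" assume "x \<in> {x. (\<Sum>j\<in>UNIV. x $ j) = 0}"
  then have "BT (\<chi> l. - x $ Some l) = x"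
    by (auto simp: vec_eq_iff split_option_all BT_None BT_Some sum_UNIV_option sum_negf
        add_eq_0_iff)
  then show "x \<in> range BT" by (metis rangeI)
qed (auto simp: sum_BT)

lemma inner_Qmat_eq_inner_BT: "a \<bullet> (Qmat *v a) = BT a \<bullet> BT (a :: real^'g::finite)"
proof -
  have "a \<bullet> (Qmat *v a) = a \<bullet> (Bmat *v (transpose Bmat *v a))"
    by (simp add: Qmat_def matrix_vector_mul_assoc[symmetric])
  also have "\<dots> = BT a \<bullet> BT a" by (simp add: dot_lmul_matrix BT_def)
  finally show ?thesis .
qed

lemma BT_int_vecs: "BT ` (int_vecs :: (real^'g::finite) set) = root_lattice"
proof (intro equalityI subsetI)
  fix y assume "y \<in> BT ` (int_vecs :: (real^'g) set)"
  then show "y \<in> root_lattice"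
    by (auto simp: root_lattice_def int_vecs_def sum_BT split_option_all BT_None BT_Some
        Ints_sum)
next
  fix y :: "real^('g option)" assume y: "y \<in> root_lattice"
  then have "y \<in> range BT" by (simp add: range_BT root_lattice_def)
  then obtain a :: "real^'g" where "y = BT a" by blast
  moreover from this have "a $ l = - y $ Some l" for l by (simp add: BT_Some)
  with y have "a \<in> int_vecs" by (simp add: root_lattice_def int_vecs_def)
  ultimately show "y \<in> BT ` int_vecs" by blast
qed

lemma voronoi_Q_iff: "(a :: real^'g::finite) \<in> voronoi_Q \<longleftrightarrow> BT a \<in> root_cell"
proof -
  have "a \<in> voronoi_Q \<longleftrightarrow> (\<forall>c\<in>int_vecs. BT a \<bullet> BT a \<le> (BT a - BT c) \<bullet> (BT a - BT c))"
    by (simp add: voronoi_Q_def inner_Qmat_eq_inner_BT linear_diff[OF linear_BT])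
  also have "\<dots> \<longleftrightarrow> (\<forall>y\<in>root_lattice. BT a \<bullet> BT a \<le> (BT a - y) \<bullet> (BT a - y))"
    by (simp flip: BT_int_vecs)
  also have "\<dots> \<longleftrightarrow> BT a \<in> root_cell"
    by (rule root_cell_iff_origin_nearest[OF sum_BT, symmetric])
  finally show ?thesis .
qed

lemma BT_voronoi_Q: "BT ` (voronoi_Q :: (real^'g::finite) set) = root_cell"
proof (intro equalityI subsetI)
  fix x :: "real^('g option)" assume x: "x \<in> root_cell"
  then have "x \<in> range BT" by (simp add: range_BT root_cell_def)
  then obtain a :: "real^'g" where "x = BT a" by blast
  with x show "x \<in> BT ` voronoi_Q" by (auto simp: voronoi_Q_iff)
qed (auto simp: voronoi_Q_iff)

lemma gnum_plus_one: "gnum TYPE('g::finite) + 1 = real CARD('g option)"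
  by (simp add: gnum_def)

lemma proj_mat_eq_centering: "proj_mat *v x = centering (x :: real^('g::finite option))"
proof -
  have "gnum TYPE('g) + 1 \<noteq> 0" by (simp add: gnum_plus_one)
  then have "proj_mat $ i $ j * x $ j = (if i = j then x $ j else 0) - x $ j / (gnum TYPE('g) + 1)"
    for i j :: "'g option"
    by (cases "i = j") (simp_all add: proj_mat_def field_simps)
  then show ?thesis
    by (simp add: vec_eq_iff matrix_vector_mult_def centering_def sum_subtractf gnum_plus_one
        sum_divide_distrib)
qed

lemma perm_class_eq_level_vectors:
  "perm_class k = (level_vectors k :: (real^('g::finite option)) set)"
proof -
  have "- (real CARD('g option) - k) / CARD('g option) = k / CARD('g option) - 1"
    by (simp add: field_simps del: card_option)
  then show ?thesis unfolding perm_class_def level_vectors_def gnum_plus_one by simp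
qed

lemma BT_mem_level_vectors_iff: "BT a \<in> level_vectors k \<longleftrightarrow> (a :: real^'g::finite) \<in> vertex_class k"
proof -
  define \<alpha> where "\<alpha> = real k / CARD('g option)"
  have "- k / (gnum TYPE('g) + 1) = - \<alpha>" "(gnum TYPE('g) + 1 - k) / (gnum TYPE('g) + 1) = 1 - \<alpha>"
    by (simp_all add: \<alpha>_def gnum_def diff_divide_distrib)
  then have "vertex_class k = {a :: real^'g. (\<forall>i. a $ i \<in> {- \<alpha>, 1 - \<alpha>}) \<and>
      card {i. a $ i = 1 - \<alpha>} \<in> {k, k - 1}}"
    by (simp add: vertex_class_def)
  moreover have "BT a \<in> level_vectors k \<longleftrightarrow>
      (\<forall>l. - a $ l \<in> {\<alpha>, \<alpha> - 1}) \<and> card {l. - a $ l = \<alpha> - 1} \<in> {k, k - 1}"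
    unfolding level_vectors_option_iff \<alpha>_def[symmetric] by (simp add: sum_BT BT_Some)
  moreover have "{l. - a $ l = \<alpha> - 1} = {l. a $ l = 1 - \<alpha>}" by auto
  moreover have "- a $ l \<in> {\<alpha>, \<alpha> - 1} \<longleftrightarrow> a $ l \<in> {- \<alpha>, 1 - \<alpha>}" for l by auto
  ultimately show ?thesis by (simp only: mem_Collect_eq)
qed

lemma BT_vertex_class: "BT ` (vertex_class k :: (real^'g::finite) set) = level_vectors k"
proof (intro equalityI subsetI)
  fix x :: "real^('g option)" assume x: "x \<in> level_vectors k"
  then have "x \<in> range BT" by (simp add: range_BT sum_level_vector)
  then obtain a :: "real^'g" where "x = BT a" by blast
  with x show "x \<in> BT ` vertex_class k" by (auto simp: BT_mem_level_vectors_iff)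
qed (auto simp: BT_mem_level_vectors_iff)

lemma BT_VQ_eq_root_cell: "(BT_VQ :: (real^('g::finite option)) set) = root_cell"
proof -
  have "BT ` {v :: real^'g. v extreme_point_of voronoi_Q} = {x. x extreme_point_of BT ` voronoi_Q}"
    by (rule extreme_points_of_linear_image[OF linear_BT inj_BT, symmetric])
  then show ?thesis
    unfolding BT_VQ_def BT_voronoi_Q
    by (simp flip: Krein_Milman_Minkowski[OF compact_root_cell convex_root_cell])
qed

theorem proposition3p4:
  shows "comb_equiv (voronoi_Q :: (real^'g::finite) set) (BT_VQ :: (real^('g option)) set)
     \<and> {v. v extreme_point_of (BT_VQ :: (real^('g option)) set)}
         = (\<Union>k\<in>{1..CARD('g)}. BT ` (vertex_class k :: (real^'g) set))
     \<and> (\<forall>k\<in>{1..CARD('g)}. BT ` (vertex_class k :: (real^'g) set) = perm_class k)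
     \<and> (BT_VQ :: (real^('g option)) set) = (\<lambda>x. proj_mat *v x) ` cube"
proof (intro conjI ballI)
  show "comb_equiv (voronoi_Q :: (real^'g) set) (BT_VQ :: (real^('g option)) set)"
    using comb_equiv_linear_image[OF linear_BT inj_BT, of voronoi_Q]
    by (simp add: BT_voronoi_Q BT_VQ_eq_root_cell)
  have "2 \<le> CARD('g option)" by simp
  then show "{v. v extreme_point_of (BT_VQ :: (real^('g option)) set)}
      = (\<Union>k\<in>{1..CARD('g)}. BT ` (vertex_class k :: (real^'g) set))"
    by (simp add: BT_VQ_eq_root_cell extreme_points_of_root_cell BT_vertex_class
        atLeastLessThanSuc_atLeastAtMost)
  show "BT ` (vertex_class k :: (real^'g) set) = perm_class k" for k
    by (simp add: BT_vertex_class perm_class_eq_level_vectors)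
  show "(BT_VQ :: (real^('g option)) set) = (\<lambda>x. proj_mat *v x) ` cube"
    by (simp add: BT_VQ_eq_root_cell proj_mat_eq_centering centering_cube)
qed

end
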